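(* Suppose the support of $\mathbb F$ is $(0,1)$. Then the first-best payoff $\overline U_i$ is strictly convex and differentiable on $(0,1)$, and its right derivative at $0$ equals $0$.
   Context: Setup. A state $\omega\in\{-1,+1\}$ is drawn with probability $1/2$ each. There are $n\ge2$ agents. Conditional on $\omega$, signals $s_1,\dots,s_n$ are i.i.d. with distribution $\mathbb F_\omega$ on $[0,1]$, normalized so that $s_i=\mathbb P[\omega=+1\mid s_i]$; $\mathbb F_{-1},\mathbb F_{+1}$ mutually absolutely continuous with densities; $\mathbb F=(\mathbb F_{-1}+\mathbb F_{+1})/2$ has a density. The first-best payoff of agent $i$ is, for $s\in[0,1]$, $\overline U_i(s)=s\,\mathbb P[e(s,s_{-i})\mid\omega=+1]-(1-s)\,\mathbb P[e(s,s_{-i})\mid\omega=-1]$, where $e(s,s_{-i})$ is the event $s\prod_{k\ne i}s_k\ge(1-s)\prod_{k\ne i}(1-s_k)$ (i.e., $\mathrm{LR}(s,s_{-i})\ge1$); it is the interim payoff under the efficient allocation $\mathbb I\{\mathrm{LR}(s_i,s_{-i})\ge1\}$. *)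

theory Defs
  imports "HOL-Probability.Probability"
begin

definition strict_convex_on :: "real set \<Rightarrow> (real \<Rightarrow> real) \<Rightarrow> bool" where
  "strict_convex_on S f \<longleftrightarrow> convex S \<and>
     (\<forall>x\<in>S. \<forall>y\<in>S. \<forall>u. x \<noteq> y \<and> 0 < u \<and> u < 1 \<longrightarrow>
        f (u * x + (1 - u) * y) < u * f x + (1 - u) * f y)"

definition sig_dist :: "(real \<Rightarrow> real) \<Rightarrow> real measure" where
  "sig_dist g = density lborel (\<lambda>x. ennreal (g x))"

definition eff_event :: "nat \<Rightarrow> nat \<Rightarrow> real \<Rightarrow> (nat \<Rightarrow> real) \<Rightarrow> bool" where
  "eff_event n i s t \<longleftrightarrow>
     s * (\<Prod>k\<in>{..<n} - {i}. t k) \<ge> (1 - s) * (\<Prod>k\<in>{..<n} - {i}. (1 - t k))"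

definition eff_prob :: "nat \<Rightarrow> nat \<Rightarrow> (real \<Rightarrow> real) \<Rightarrow> real \<Rightarrow> real" where
  "eff_prob n i g s =
     measure (PiM ({..<n} - {i}) (\<lambda>_. sig_dist g))
       {t \<in> space (PiM ({..<n} - {i}) (\<lambda>_. sig_dist g)). eff_event n i s t}"

text \<open>First-best payoff of agent i; gp, gm are the densities of F_{+1}, F_{-1}.\<close>
definition Ubar :: "nat \<Rightarrow> nat \<Rightarrow> (real \<Rightarrow> real) \<Rightarrow> (real \<Rightarrow> real) \<Rightarrow> real \<Rightarrow> real" where
  "Ubar n i gp gm s = s * eff_prob n i gp s - (1 - s) * eff_prob n i gm s"

end

theory Submission
  imports Defs
begin

text \<open>
  Let F = (F_{-1} + F_{+1}) / 2 be the unconditional signal distribution. The normalization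
  s = P[omega = +1 | s] says that F_{+1} and F_{-1} have densities 2x and 2(1 - x) with respect
  to F. Hence, writing P(t) = prod_k 2 t_k and R(t) = prod_k 2 (1 - t_k) for the likelihoods of
  the other agents' signals t, the first-best payoff is the expectation under F^(n-1)
    Ubar(s) = E[max(0, s P(t) - (1 - s) R(t))]
  of convex piecewise linear functions of s, the one for t having its kink at R(t) / (P(t) + R(t)).
  As F has no atoms, the kink almost surely misses any given s, so dominated convergence
  differentiates under the integral; as the kink is positive, the derivative at 0 is 0. Finally,
  for x < y full support gives a box of signals of positive probability whose kinks all lie
  strictly between x and y, which makes the convexity strict.
\<close>

lemma integral_dominated_convergence_within:
  fixes F :: "real \<Rightarrow> 'a \<Rightarrow> real"
  assumes "\<And>y. F y \<in> borel_measurable M" and "G \<in> borel_measurable M"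
    and "integrable M w"
    and bound: "\<And>y. y \<in> S \<Longrightarrow> y \<noteq> x \<Longrightarrow> AE t in M. \<bar>F y t\<bar> \<le> w t"
    and lim: "AE t in M. ((\<lambda>y. F y t) \<longlongrightarrow> G t) (at x within S)"
  shows "((\<lambda>y. integral\<^sup>L M (F y)) \<longlongrightarrow> integral\<^sup>L M G) (at x within S)"
  unfolding tendsto_at_iff_sequentially
proof (intro allI impI)
  fix X :: "nat \<Rightarrow> real"
  assume X: "\<forall>k. X k \<in> S - {x}" "X \<longlonglongrightarrow> x"
  have "(\<lambda>k. integral\<^sup>L M (F (X k))) \<longlonglongrightarrow> integral\<^sup>L M G"
  proof (rule integral_dominated_convergence[OF assms(2,1,3)])
    show "AE t in M. (\<lambda>k. F (X k) t) \<longlonglongrightarrow> G t"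
      using lim by eventually_elim (use X in \<open>auto simp: tendsto_at_iff_sequentially o_def\<close>)
    show "AE t in M. norm (F (X k) t) \<le> w t" for k
      using bound[of "X k"] X(1) by auto
  qed
  then show "((\<lambda>y. integral\<^sup>L M (F y)) \<circ> X) \<longlonglongrightarrow> integral\<^sup>L M G"
    by (simp add: o_def)
qed

lemma measure_density_eq_integral:
  fixes f :: "'a \<Rightarrow> real"
  assumes [measurable]: "f \<in> borel_measurable M" "A \<in> sets M" and "AE x in M. 0 \<le> f x"
  shows "measure (density M (\<lambda>x. ennreal (f x))) A = (\<integral>x. f x * indicator A x \<partial>M)"
proof -
  have "emeasure (density M (\<lambda>x. ennreal (f x))) A = (\<integral>\<^sup>+x. ennreal (f x * indicator A x) \<partial>M)"
    by (auto simp: emeasure_density intro!: nn_integral_cong split: split_indicator)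
  moreover have "(\<integral>x. f x * indicator A x \<partial>M) = enn2real (\<integral>\<^sup>+x. ennreal (f x * indicator A x) \<partial>M)"
    using assms(3) by (intro integral_eq_nn_integral) (auto simp: indicator_def)
  ultimately show ?thesis by (simp add: measure_def)
qed

lemma prod_indicator_PiE:
  assumes "finite I" "t \<in> extensional I"
  shows "(\<Prod>k\<in>I. indicator (A k) (t k) :: ennreal) = indicator (PiE I A) t"
proof (cases "\<forall>k\<in>I. t k \<in> A k")
  case True
  then show ?thesis using assms(2) by (simp add: PiE_def)
next
  case False
  then obtain k where k: "k \<in> I" "t k \<notin> A k" by blast
  then have "(\<Prod>k\<in>I. indicator (A k) (t k) :: ennreal) = 0"
    using assms(1) by (intro prod_zero bexI[of _ k]) auto
  moreover have "t \<notin> PiE I A" using k by (auto simp: PiE_def)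
  ultimately show ?thesis by simp
qed

lemma PiM_density:
  fixes N :: "'a measure" and f :: "'a \<Rightarrow> ennreal"
  assumes fin: "finite I" and "sigma_finite_measure N" and f: "f \<in> borel_measurable N"
    and "AE x in N. f x \<noteq> \<infinity>"
  shows "PiM I (\<lambda>_. density N f) = density (PiM I (\<lambda>_. N)) (\<lambda>t. \<Prod>k\<in>I. f (t k))"
proof -
  interpret N: product_sigma_finite "\<lambda>_. N"
    by (simp add: product_sigma_finite_def assms(2))
  interpret D: product_sigma_finite "\<lambda>_. density N f"
    using assms(2,4) f
    by (simp add: product_sigma_finite_def sigma_finite_measure.sigma_finite_iff_density_finite)
  have "density (PiM I (\<lambda>_. N)) (\<lambda>t. \<Prod>k\<in>I. f (t k)) = PiM I (\<lambda>_. density N f)"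
  proof (rule D.PiM_eqI[OF fin])
    show "sets (density (PiM I (\<lambda>_. N)) (\<lambda>t. \<Prod>k\<in>I. f (t k))) = sets (PiM I (\<lambda>_. density N f))"
      unfolding sets_density by (rule sets_PiM_cong) simp_all
  next
    fix A assume "\<And>k. k \<in> I \<Longrightarrow> A k \<in> sets (density N f)"
    then have A: "\<And>k. k \<in> I \<Longrightarrow> A k \<in> sets N" by simp
    have "(\<lambda>t. \<Prod>k\<in>I. f (t k)) \<in> borel_measurable (PiM I (\<lambda>_. N))"
      using f by (intro borel_measurable_prod_ennreal measurable_compose[OF measurable_component_singleton]) auto
    then have "emeasure (density (PiM I (\<lambda>_. N)) (\<lambda>t. \<Prod>k\<in>I. f (t k))) (PiE I A)
        = (\<integral>\<^sup>+ t. (\<Prod>k\<in>I. f (t k)) * indicator (PiE I A) t \<partial>PiM I (\<lambda>_. N))"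
      by (rule emeasure_density) (rule sets_PiM_I_finite[OF fin A])
    also have "\<dots> = (\<integral>\<^sup>+ t. (\<Prod>k\<in>I. f (t k) * indicator (A k) (t k)) \<partial>PiM I (\<lambda>_. N))"
    proof (rule nn_integral_cong)
      fix t assume "t \<in> space (PiM I (\<lambda>_. N))"
      then have "t \<in> extensional I" by (simp add: space_PiM PiE_def)
      then show "(\<Prod>k\<in>I. f (t k)) * indicator (PiE I A) t = (\<Prod>k\<in>I. f (t k) * indicator (A k) (t k))"
        by (simp add: prod.distrib prod_indicator_PiE[OF fin])
    qed
    also have "\<dots> = (\<Prod>k\<in>I. \<integral>\<^sup>+ y. f y * indicator (A k) y \<partial>N)"
      using A f by (intro N.product_nn_integral_prod[OF fin]) auto
    also have "\<dots> = (\<Prod>k\<in>I. emeasure (density N f) (A k))"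
      using A f by (intro prod.cong refl) (simp add: emeasure_density)
    finally show "emeasure (density (PiM I (\<lambda>_. N)) (\<lambda>t. \<Prod>k\<in>I. f (t k))) (PiE I A)
        = (\<Prod>k\<in>I. emeasure (density N f) (A k))" .
  qed
  then show ?thesis by simp
qed

lemma strict_convex_onI:
  assumes "convex S"
    and less: "\<And>x y u. x \<in> S \<Longrightarrow> y \<in> S \<Longrightarrow> x < y \<Longrightarrow> 0 < u \<Longrightarrow> u < 1 \<Longrightarrow>
      f (u * x + (1 - u) * y) < u * f x + (1 - u) * f y"
  shows "strict_convex_on S f"
  unfolding strict_convex_on_def
proof (intro conjI ballI allI impI)
  fix x y u :: real
  assume xy: "x \<in> S" "y \<in> S" and u: "x \<noteq> y \<and> 0 < u \<and> u < 1"
  show "f (u * x + (1 - u) * y) < u * f x + (1 - u) * f y"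
  proof (cases "x < y")
    case True
    then show ?thesis using less xy u by blast
  next
    case False
    then have "f ((1 - u) * y + (1 - (1 - u)) * x) < (1 - u) * f y + (1 - (1 - u)) * f x"
      using less[of y x "1 - u"] xy u by simp
    then show ?thesis by (simp add: add.commute)
  qed
qed (fact \<open>convex S\<close>)

section \<open>Hinge functions\<close>

definition hinge :: "real \<Rightarrow> real \<Rightarrow> real \<Rightarrow> real" where
  "hinge P R s = max 0 (s * P - (1 - s) * R)"

lemma hinge_argument_combination:
  "(u * x + (1 - u) * y) * P - (1 - (u * x + (1 - u) * y)) * R
    = u * (x * P - (1 - x) * R) + (1 - u) * (y * P - (1 - y) * (R :: real))"
  by algebra

lemma hinge_lipschitz:
  assumes "0 \<le> P" "0 \<le> R"
  shows "\<bar>hinge P R y - hinge P R s\<bar> \<le> \<bar>y - s\<bar> * (P + R)"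
proof -
  have max_lipschitz: "\<bar>max 0 a - max 0 b\<bar> \<le> \<bar>a - b\<bar>" for a b :: real
    by (simp add: max_def abs_if)
  have "(y * P - (1 - y) * R) - (s * P - (1 - s) * R) = (y - s) * (P + R)"
    by (simp add: algebra_simps)
  then show ?thesis
    using max_lipschitz[of "y * P - (1 - y) * R" "s * P - (1 - s) * R"] assms
    by (simp add: hinge_def abs_mult)
qed

lemma hinge_convex:
  assumes "0 \<le> u" "u \<le> 1"
  shows "hinge P R (u * x + (1 - u) * y) \<le> u * hinge P R x + (1 - u) * hinge P R y"
proof -
  have "u * (x * P - (1 - x) * R) \<le> u * hinge P R x"
    and "(1 - u) * (y * P - (1 - y) * R) \<le> (1 - u) * hinge P R y"
    using assms by (simp_all add: hinge_def mult_left_mono)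
  moreover have "0 \<le> u * hinge P R x" "0 \<le> (1 - u) * hinge P R y"
    using assms by (simp_all add: hinge_def)
  ultimately show ?thesis
    by (simp add: hinge_def[of P R "u * x + (1 - u) * y"] hinge_argument_combination)
qed

lemma hinge_strict_convex:
  assumes "0 < u" "u < 1" and "x * P < (1 - x) * R" and "(1 - y) * R < y * P"
  shows "hinge P R (u * x + (1 - u) * y) < u * hinge P R x + (1 - u) * hinge P R y"
proof -
  have "u * (x * P - (1 - x) * R) < 0" "0 < (1 - u) * (y * P - (1 - y) * R)"
    using assms by (simp_all add: mult_pos_neg)
  then show ?thesis
    unfolding hinge_def hinge_argument_combination using assms by auto
qed

lemma hinge_has_derivative:
  assumes "s * P \<noteq> (1 - s) * R"
  shows "(hinge P R has_real_derivative (if (1 - s) * R < s * P then P + R else 0)) (at s)"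
proof (cases "(1 - s) * R < s * P")
  case True
  have "((\<lambda>y. y * P - (1 - y) * R) has_real_derivative P + R) (at s)"
    by (auto intro!: derivative_eq_intros)
  then have "(hinge P R has_real_derivative P + R) (at s)"
  proof (rule has_field_derivative_transform_within_open)
    show "open {y. (1 - y) * R < y * P}" by (intro open_Collect_less continuous_intros)
  qed (use True in \<open>auto simp: hinge_def\<close>)
  then show ?thesis using True by simp
next
  case False
  then have "s * P < (1 - s) * R" using assms by simp
  have "(hinge P R has_real_derivative 0) (at s)"
  proof (rule has_field_derivative_transform_within_open[OF DERIV_const])
    show "open {y. y * P < (1 - y) * R}" by (intro open_Collect_less continuous_intros)
  qed (use \<open>s * P < (1 - s) * R\<close> in \<open>auto simp: hinge_def\<close>)
  then show ?thesis using False by simp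
qed

lemma exists_separating_interval:
  fixes lo hi :: real and m :: nat
  assumes "0 < lo" "lo < hi" "hi < 1" "m \<ge> 1"
  shows "\<exists>p q. 0 < p \<and> p < q \<and> q < 1 \<and>
    (1 - hi) * (1 - p) ^ m < hi * p ^ m \<and> lo * q ^ m < (1 - lo) * (1 - q) ^ m"
proof -
  define \<alpha> where "\<alpha> = root m ((1 - hi) / hi)"
  define \<beta> where "\<beta> = root m ((1 - lo) / lo)"
  have m: "0 < m" using assms by simp
  have odds: "0 < (1 - hi) / hi" "(1 - hi) / hi < (1 - lo) / lo"
    using assms by (auto simp: field_simps)
  have \<alpha>: "0 < \<alpha>" "\<alpha> ^ m = (1 - hi) / hi" and "\<alpha> < \<beta>" "\<beta> ^ m = (1 - lo) / lo"
    unfolding \<alpha>_def \<beta>_def using odds m by (auto simp: real_root_less_iff)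
  \<comment> \<open>the odds \<open>a\<close> of \<open>p\<close> and \<open>b\<close> of \<open>q\<close> lie strictly between the \<open>m\<close>-th roots of the odds of \<open>hi\<close> and \<open>lo\<close>\<close>
  define a where "a = (2 * \<alpha> + \<beta>) / 3"
  define b where "b = (\<alpha> + 2 * \<beta>) / 3"
  have ab: "\<alpha> < a" "a < b" "b < \<beta>" "0 < a" using \<open>\<alpha> < \<beta>\<close> \<alpha> by (auto simp: a_def b_def)
  define p where "p = a / (1 + a)"
  define q where "q = b / (1 + b)"
  have pq: "0 < p" "p < q" "q < 1" using ab by (auto simp: p_def q_def field_simps)
  have p_odds: "p = a * (1 - p)" and q_odds: "q = b * (1 - q)"
    using ab by (auto simp: p_def q_def field_simps)
  have "(1 - hi) / hi < a ^ m" using power_strict_mono[of \<alpha> a m] \<alpha> ab m by simp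
  then have "(1 - hi) * (1 - p) ^ m < hi * a ^ m * (1 - p) ^ m"
    using assms pq by (intro mult_strict_right_mono) (auto simp: field_simps)
  also have "\<dots> = hi * p ^ m" by (subst (2) p_odds) (simp add: power_mult_distrib)
  finally have hi_ineq: "(1 - hi) * (1 - p) ^ m < hi * p ^ m" .
  have "b ^ m < (1 - lo) / lo"
    using power_strict_mono[of b \<beta> m] \<open>\<beta> ^ m = _\<close> ab m by simp
  then have "lo * b ^ m * (1 - q) ^ m < (1 - lo) * (1 - q) ^ m"
    using assms pq by (intro mult_strict_right_mono) (auto simp: field_simps)
  moreover have "lo * b ^ m * (1 - q) ^ m = lo * q ^ m" by (subst (2) q_odds) (simp add: power_mult_distrib)
  ultimately show ?thesis using pq hi_ineq by auto
qed

section \<open>Expectations of hinge functions\<close>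

locale hinge_expectation = finite_measure Q for Q :: "'a measure" +
  fixes P R :: "'a \<Rightarrow> real" and K :: real
  assumes measurable_P[measurable]: "P \<in> borel_measurable Q"
    and measurable_R[measurable]: "R \<in> borel_measurable Q"
    and AE_bounded: "AE t in Q. 0 \<le> P t \<and> P t \<le> K \<and> 0 \<le> R t \<and> R t \<le> K"
begin

definition expected_hinge :: "real \<Rightarrow> real" where
  "expected_hinge s = (\<integral>t. hinge (P t) (R t) s \<partial>Q)"

lemma measurable_hinge[measurable]: "(\<lambda>t. hinge (P t) (R t) s) \<in> borel_measurable Q"
  unfolding hinge_def by measurable

lemma AE_hinge_quotient_bounded:
  assumes "y \<noteq> s"
  shows "AE t in Q. \<bar>(hinge (P t) (R t) y - hinge (P t) (R t) s) / (y - s)\<bar> \<le> 2 * K"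
  using AE_bounded
proof eventually_elim
  case (elim t)
  have "\<bar>hinge (P t) (R t) y - hinge (P t) (R t) s\<bar> \<le> \<bar>y - s\<bar> * (P t + R t)"
    using elim by (intro hinge_lipschitz) auto
  also have "\<dots> \<le> \<bar>y - s\<bar> * (2 * K)" using elim by (intro mult_left_mono) auto
  finally show ?case using assms by (simp add: abs_divide divide_le_eq mult.commute)
qed

lemma integrable_hinge: "integrable Q (\<lambda>t. hinge (P t) (R t) s)"
proof (cases "s = 0")
  case True
  then show ?thesis
    using AE_bounded by (intro integrable_cong_AE_imp[OF integrable_zero]) (auto simp: hinge_def)
next
  case False
  have "AE t in Q. hinge (P t) (R t) 0 = 0" using AE_bounded by eventually_elim (simp add: hinge_def)
  then have "AE t in Q. norm (hinge (P t) (R t) s) \<le> 2 * K * \<bar>s\<bar>"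
    using AE_hinge_quotient_bounded[OF False]
  proof eventually_elim
    case (elim t)
    then have "\<bar>hinge (P t) (R t) s\<bar> / \<bar>s\<bar> \<le> 2 * K" by (simp add: abs_divide)
    then show ?case using False by (simp add: pos_divide_le_eq)
  qed
  then show ?thesis by (intro integrable_const_bound) simp_all
qed

lemma expected_hinge_has_derivative:
  assumes "AE t in Q. s * P t \<noteq> (1 - s) * R t"
  shows "(expected_hinge has_real_derivative
      (\<integral>t. (if (1 - s) * R t < s * P t then P t + R t else 0) \<partial>Q)) (at s)"
  unfolding has_field_derivative_iff
proof -
  have "((\<lambda>y. \<integral>t. (hinge (P t) (R t) y - hinge (P t) (R t) s) / (y - s) \<partial>Q)
      \<longlongrightarrow> (\<integral>t. (if (1 - s) * R t < s * P t then P t + R t else 0) \<partial>Q)) (at s within UNIV)"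
  proof (rule integral_dominated_convergence_within[where w = "\<lambda>_. 2 * K"])
    show "AE t in Q. ((\<lambda>y. (hinge (P t) (R t) y - hinge (P t) (R t) s) / (y - s))
        \<longlongrightarrow> (if (1 - s) * R t < s * P t then P t + R t else 0)) (at s within UNIV)"
      using assms by eventually_elim (simp add: hinge_has_derivative flip: has_field_derivative_iff)
    show "AE t in Q. \<bar>(hinge (P t) (R t) y - hinge (P t) (R t) s) / (y - s)\<bar> \<le> 2 * K"
      if "y \<noteq> s" for y
      using that by (rule AE_hinge_quotient_bounded)
  qed simp_all
  then show "((\<lambda>y. (expected_hinge y - expected_hinge s) / (y - s))
      \<longlongrightarrow> (\<integral>t. (if (1 - s) * R t < s * P t then P t + R t else 0) \<partial>Q)) (at s)"
    by (simp add: expected_hinge_def integrable_hinge)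
qed

lemma expected_hinge_strict_convex:
  assumes "convex S"
    and separated: "\<And>x y. x \<in> S \<Longrightarrow> y \<in> S \<Longrightarrow> x < y \<Longrightarrow>
      emeasure Q {t \<in> space Q. x * P t < (1 - x) * R t \<and> (1 - y) * R t < y * P t} \<noteq> 0"
  shows "strict_convex_on S expected_hinge"
proof (rule strict_convex_onI[OF \<open>convex S\<close>])
  fix x y u :: real
  assume xy: "x \<in> S" "y \<in> S" "x < y" and u: "0 < u" "u < 1"
  let ?A = "{t \<in> space Q. x * P t < (1 - x) * R t \<and> (1 - y) * R t < y * P t}"
  have "(\<integral>t. hinge (P t) (R t) (u * x + (1 - u) * y) \<partial>Q)
      < (\<integral>t. u * hinge (P t) (R t) x + (1 - u) * hinge (P t) (R t) y \<partial>Q)"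
  proof (rule integral_less_AE)
    show "emeasure Q ?A \<noteq> 0" using separated xy by blast
    show "?A \<in> sets Q" by measurable
    show "AE t in Q. t \<in> ?A \<longrightarrow> hinge (P t) (R t) (u * x + (1 - u) * y)
        \<noteq> u * hinge (P t) (R t) x + (1 - u) * hinge (P t) (R t) y"
    proof (intro AE_I2 impI)
      fix t assume "t \<in> ?A"
      then show "hinge (P t) (R t) (u * x + (1 - u) * y)
          \<noteq> u * hinge (P t) (R t) x + (1 - u) * hinge (P t) (R t) y"
        using hinge_strict_convex[OF u, of x "P t" "R t" y] by auto
    qed
    show "AE t in Q. hinge (P t) (R t) (u * x + (1 - u) * y)
        \<le> u * hinge (P t) (R t) x + (1 - u) * hinge (P t) (R t) y"
      using u by (intro AE_I2 hinge_convex) auto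
  qed (simp_all add: integrable_hinge)
  then show "expected_hinge (u * x + (1 - u) * y) < u * expected_hinge x + (1 - u) * expected_hinge y"
    by (simp add: expected_hinge_def integrable_hinge)
qed

end

section \<open>Products of atomless signals\<close>

lemma indifference_solution_unique:
  fixes a b s y :: real
  assumes "0 < a" "0 < b" "0 \<le> s" "s \<le> 1" and "s * (2 * y * a) = (1 - s) * (2 * (1 - y) * b)"
  shows "y = (1 - s) * b / (s * a + (1 - s) * b)"
proof -
  have "0 < s * a + (1 - s) * b"
    using assms(1-4) by (cases "s = 0") (auto intro: add_pos_nonneg add_nonneg_pos)
  moreover have "y * (s * a + (1 - s) * b) = (1 - s) * b"
    using assms(5) by (simp add: algebra_simps)
  ultimately show ?thesis by (simp add: eq_divide_eq)
qed

locale signal_products = finite_product_prob_space "\<lambda>_. F" I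
  for F :: "real measure" and I :: "'i set" +
  assumes sets_F: "sets F = sets borel"
    and nonempty_I: "I \<noteq> {}"
    and AE_interior: "AE x in F. 0 < x \<and> x < 1"
    and atomless: "\<And>c. emeasure F {c} = 0"
    and full_support: "\<And>a b. 0 < a \<Longrightarrow> a < b \<Longrightarrow> b < 1 \<Longrightarrow> emeasure F {a<..<b} \<noteq> 0"
begin

declare finite_index[simp]

definition likelihood_plus :: "('i \<Rightarrow> real) \<Rightarrow> real" where
  "likelihood_plus t = (\<Prod>k\<in>I. 2 * t k)"

definition likelihood_minus :: "('i \<Rightarrow> real) \<Rightarrow> real" where
  "likelihood_minus t = (\<Prod>k\<in>I. 2 * (1 - t k))"

lemma space_F[simp]: "space F = UNIV"
  using sets_eq_imp_space_eq[OF sets_F] by simp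

lemma measurable_coordinate:
  fixes g :: "real \<Rightarrow> 'b :: topological_space"
  shows "k \<in> I \<Longrightarrow> g \<in> borel_measurable borel \<Longrightarrow> (\<lambda>t. g (t k)) \<in> borel_measurable (PiM I (\<lambda>_. F))"
  by (rule measurable_compose[OF measurable_component_singleton])
    (simp_all add: measurable_cong_sets[OF sets_F refl])

lemma measurable_likelihoods[measurable]:
  "likelihood_plus \<in> borel_measurable (PiM I (\<lambda>_. F))"
  "likelihood_minus \<in> borel_measurable (PiM I (\<lambda>_. F))"
  unfolding likelihood_plus_def likelihood_minus_def
  by (rule borel_measurable_prod; rule measurable_coordinate; simp)+

lemma sets_interior_coordinates:
  "{t \<in> space (PiM I (\<lambda>_. F)). \<forall>k\<in>I. 0 < t k \<and> t k < 1} \<in> sets (PiM I (\<lambda>_. F))"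
  using measurable_coordinate[where g = "\<lambda>x. x"]
  by (intro sets.sets_Collect_finite_All) (simp_all add: pred_def[symmetric])

lemma AE_interior_coordinates: "AE t in PiM I (\<lambda>_. F). \<forall>k\<in>I. 0 < t k \<and> t k < 1"
  by (rule AE_finite_allI[OF finite_index]) (rule AE_component, assumption, rule AE_interior)

lemma likelihoods_bounded:
  assumes "\<forall>k\<in>I. 0 < t k \<and> t k < 1"
  shows "0 < likelihood_plus t \<and> likelihood_plus t \<le> 2 ^ card I \<and>
    0 < likelihood_minus t \<and> likelihood_minus t \<le> 2 ^ card I"
proof -
  have "likelihood_plus t \<le> (\<Prod>k\<in>I. 2)" "likelihood_minus t \<le> (\<Prod>k\<in>I. 2)"
    unfolding likelihood_plus_def likelihood_minus_def by (rule prod_mono; use assms in auto)+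
  moreover have "0 < likelihood_plus t" "0 < likelihood_minus t"
    unfolding likelihood_plus_def likelihood_minus_def by (rule prod_pos; use assms in auto)+
  ultimately show ?thesis by simp
qed

sublocale hinge_expectation "PiM I (\<lambda>_. F)" likelihood_plus likelihood_minus "2 ^ card I"
proof
  show "AE t in PiM I (\<lambda>_. F). 0 \<le> likelihood_plus t \<and> likelihood_plus t \<le> 2 ^ card I \<and>
      0 \<le> likelihood_minus t \<and> likelihood_minus t \<le> 2 ^ card I"
    using AE_interior_coordinates by eventually_elim (auto dest: likelihoods_bounded)
qed simp_all

lemma likelihoods_update:
  assumes "j \<in> I"
  shows "likelihood_plus (x(j := y)) = 2 * y * (\<Prod>k\<in>I - {j}. 2 * x k)"
    and "likelihood_minus (x(j := y)) = 2 * (1 - y) * (\<Prod>k\<in>I - {j}. 2 * (1 - x k))"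
proof -
  have "(\<Prod>k\<in>I. g ((x(j := y)) k)) = g y * (\<Prod>k\<in>I - {j}. g (x k))" for g :: "real \<Rightarrow> real"
  proof -
    have "(\<Prod>k\<in>I. g ((x(j := y)) k)) = g ((x(j := y)) j) * (\<Prod>k\<in>I - {j}. g ((x(j := y)) k))"
      by (rule prod.remove[OF finite_index assms])
    also have "\<dots> = g y * (\<Prod>k\<in>I - {j}. g (x k))"
      by (intro arg_cong2[where f = "(*)"] prod.cong) auto
    finally show ?thesis .
  qed
  note update = this
  show "likelihood_plus (x(j := y)) = 2 * y * (\<Prod>k\<in>I - {j}. 2 * x k)"
    unfolding likelihood_plus_def by (simp only: update[of "\<lambda>z. 2 * z"])
  show "likelihood_minus (x(j := y)) = 2 * (1 - y) * (\<Prod>k\<in>I - {j}. 2 * (1 - x k))"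
    unfolding likelihood_minus_def by (simp only: update[of "\<lambda>z. 2 * (1 - z)"])
qed

lemma null_sets_if_sections_subsingleton:
  assumes Z: "Z \<in> sets (PiM I (\<lambda>_. F))" and "j \<in> I"
    and subsingleton: "\<And>x. \<exists>c. \<forall>y. x(j := y) \<in> Z \<longrightarrow> y = c"
  shows "Z \<in> null_sets (PiM I (\<lambda>_. F))"
proof -
  define J where "J = I - {j}"
  have I: "I = insert j J" "j \<notin> J" "finite J"
    using \<open>j \<in> I\<close> finite_index by (auto simp: J_def)
  have section_null: "(\<integral>\<^sup>+ y. indicator Z (x(j := y)) \<partial>F) = 0" for x
  proof -
    obtain c where c: "\<And>y. x(j := y) \<in> Z \<Longrightarrow> y = c" using subsingleton by blast
    have "(\<integral>\<^sup>+ y. indicator Z (x(j := y)) \<partial>F) \<le> (\<integral>\<^sup>+ y. indicator {c} y \<partial>F)"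
      by (intro nn_integral_mono) (auto simp: indicator_def dest: c)
    also have "\<dots> = 0" by (subst nn_integral_indicator) (simp_all add: sets_F atomless)
    finally show ?thesis by simp
  qed
  have "emeasure (PiM I (\<lambda>_. F)) Z = (\<integral>\<^sup>+ t. indicator Z t \<partial>PiM (insert j J) (\<lambda>_. F))"
    using Z by (simp add: I(1))
  also have "\<dots> = (\<integral>\<^sup>+ x. (\<integral>\<^sup>+ y. indicator Z (x(j := y)) \<partial>F) \<partial>PiM J (\<lambda>_. F))"
    using Z I by (intro product_nn_integral_insert) simp_all
  also have "\<dots> = 0" by (simp add: section_null)
  finally show ?thesis using Z by (simp add: null_sets_def)
qed

lemma AE_not_indifferent:
  assumes s: "0 \<le> s" "s \<le> 1"
  shows "AE t in PiM I (\<lambda>_. F). s * likelihood_plus t \<noteq> (1 - s) * likelihood_minus t"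
proof -
  obtain j where j: "j \<in> I" using nonempty_I by blast
  define Z where "Z = {t \<in> space (PiM I (\<lambda>_. F)).
    s * likelihood_plus t = (1 - s) * likelihood_minus t \<and> (\<forall>k\<in>I. 0 < t k \<and> t k < 1)}"
  have "Z \<in> null_sets (PiM I (\<lambda>_. F))"
  proof (rule null_sets_if_sections_subsingleton[OF _ j])
    have "Z = {t \<in> space (PiM I (\<lambda>_. F)). s * likelihood_plus t = (1 - s) * likelihood_minus t}
        \<inter> {t \<in> space (PiM I (\<lambda>_. F)). \<forall>k\<in>I. 0 < t k \<and> t k < 1}"
      unfolding Z_def by blast
    then show "Z \<in> sets (PiM I (\<lambda>_. F))"
      using sets_interior_coordinates by simp
    fix x :: "'i \<Rightarrow> real"
    define a where "a = (\<Prod>k\<in>I - {j}. 2 * x k)"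
    define b where "b = (\<Prod>k\<in>I - {j}. 2 * (1 - x k))"
    show "\<exists>c. \<forall>y. x(j := y) \<in> Z \<longrightarrow> y = c"
    proof (intro exI allI impI)
      fix y assume "x(j := y) \<in> Z"
      then have "s * likelihood_plus (x(j := y)) = (1 - s) * likelihood_minus (x(j := y))"
        and interior: "\<forall>k\<in>I - {j}. 0 < x k \<and> x k < 1"
        unfolding Z_def by auto
      then have eq: "s * (2 * y * a) = (1 - s) * (2 * (1 - y) * b)"
        unfolding likelihoods_update[OF j] a_def b_def by simp
      have "0 < a" "0 < b"
        using interior unfolding a_def b_def by (auto intro!: prod_pos)
      then show "y = (1 - s) * b / (s * a + (1 - s) * b)"
        using s eq by (rule indifference_solution_unique)
    qed
  qed
  then have "AE t in PiM I (\<lambda>_. F). t \<notin> Z" by (rule AE_not_in)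
  then show ?thesis using AE_interior_coordinates AE_space by eventually_elim (auto simp: Z_def)
qed

lemma box_below_threshold:
  assumes t: "\<forall>k\<in>I. p < t k \<and> t k < q" and "0 \<le> p" "q \<le> 1" "0 \<le> x" "x \<le> 1"
    and threshold: "x * q ^ card I < (1 - x) * (1 - q) ^ card I"
  shows "x * likelihood_plus t < (1 - x) * likelihood_minus t"
proof -
  have "x * (\<Prod>k\<in>I. t k) \<le> x * q ^ card I"
    unfolding prod_constant[symmetric] using t assms(2,4)
    by (intro mult_left_mono prod_mono) fastforce+
  also have "\<dots> < (1 - x) * (1 - q) ^ card I" by (fact threshold)
  also have "\<dots> \<le> (1 - x) * (\<Prod>k\<in>I. 1 - t k)"
    unfolding prod_constant[symmetric] using t assms(3,5)
    by (intro mult_left_mono prod_mono) fastforce+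
  finally show ?thesis
    unfolding likelihood_plus_def likelihood_minus_def prod.distrib by simp
qed

lemma box_above_threshold:
  assumes t: "\<forall>k\<in>I. p < t k \<and> t k < q" and "0 \<le> p" "q \<le> 1" "0 \<le> y" "y \<le> 1"
    and threshold: "(1 - y) * (1 - p) ^ card I < y * p ^ card I"
  shows "(1 - y) * likelihood_minus t < y * likelihood_plus t"
proof -
  have "(1 - y) * (\<Prod>k\<in>I. 1 - t k) \<le> (1 - y) * (1 - p) ^ card I"
    unfolding prod_constant[symmetric] using t assms(3,5)
    by (intro mult_left_mono prod_mono) fastforce+
  also have "\<dots> < y * p ^ card I" by (fact threshold)
  also have "\<dots> \<le> y * (\<Prod>k\<in>I. t k)"
    unfolding prod_constant[symmetric] using t assms(2,4)
    by (intro mult_left_mono prod_mono) fastforce+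
  finally show ?thesis
    unfolding likelihood_plus_def likelihood_minus_def prod.distrib by simp
qed

lemma emeasure_separated_ne_zero:
  assumes "0 < x" "x < y" "y < 1"
  shows "emeasure (PiM I (\<lambda>_. F)) {t \<in> space (PiM I (\<lambda>_. F)).
    x * likelihood_plus t < (1 - x) * likelihood_minus t \<and>
    (1 - y) * likelihood_minus t < y * likelihood_plus t} \<noteq> 0"
    (is "emeasure _ ?A \<noteq> 0")
proof -
  have "card I \<ge> 1" using nonempty_I by (simp add: Suc_le_eq card_gt_0_iff)
  then obtain p q where pq: "0 < p" "p < q" "q < 1"
    and "(1 - y) * (1 - p) ^ card I < y * p ^ card I" "x * q ^ card I < (1 - x) * (1 - q) ^ card I"
    using exists_separating_interval[OF assms] by blast
  then have "PiE I (\<lambda>_. {p<..<q}) \<subseteq> ?A"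
    using assms by (auto simp: space_PiM PiE_iff intro!: box_below_threshold box_above_threshold)
  then have "emeasure (PiM I (\<lambda>_. F)) (PiE I (\<lambda>_. {p<..<q})) \<le> emeasure (PiM I (\<lambda>_. F)) ?A"
    by (intro emeasure_mono) measurable
  moreover have "emeasure (PiM I (\<lambda>_. F)) (PiE I (\<lambda>_. {p<..<q})) \<noteq> 0"
    using pq full_support[OF pq] by (simp add: emeasure_PiM sets_F)
  ultimately show ?thesis by (auto simp: zero_less_iff_neq_zero[symmetric] order.strict_trans2)
qed

definition efficient_set :: "real \<Rightarrow> ('i \<Rightarrow> real) set" where
  "efficient_set s = {t \<in> space (PiM I (\<lambda>_. F)). (1 - s) * likelihood_minus t \<le> s * likelihood_plus t}"

lemma sets_efficient_set[measurable]: "efficient_set s \<in> sets (PiM I (\<lambda>_. F))"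
  unfolding efficient_set_def by measurable

lemma measure_PiM_density:
  assumes [measurable]: "g \<in> borel_measurable borel" and "\<And>x. 0 < x \<Longrightarrow> x < 1 \<Longrightarrow> 0 \<le> g x"
    and E: "E \<in> sets (PiM I (\<lambda>_. F))"
  shows "measure (PiM I (\<lambda>_. density F (\<lambda>x. ennreal (g x)))) E
    = (\<integral>t. (\<Prod>k\<in>I. g (t k)) * indicator E t \<partial>PiM I (\<lambda>_. F))"
proof -
  have AE_nonneg: "AE t in PiM I (\<lambda>_. F). \<forall>k\<in>I. 0 \<le> g (t k)"
    using AE_interior_coordinates by eventually_elim (auto intro: assms(2))
  have g_F: "(\<lambda>x. ennreal (g x)) \<in> borel_measurable F"
    by (simp add: measurable_cong_sets[OF sets_F refl])
  have prod_g: "(\<lambda>t. \<Prod>k\<in>I. g (t k)) \<in> borel_measurable (PiM I (\<lambda>_. F))"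
    by (rule borel_measurable_prod; rule measurable_coordinate; simp)
  have prod_ennreal_g: "(\<lambda>t. \<Prod>k\<in>I. ennreal (g (t k))) \<in> borel_measurable (PiM I (\<lambda>_. F))"
    by (rule borel_measurable_prod_ennreal; rule measurable_coordinate; simp)
  have "PiM I (\<lambda>_. density F (\<lambda>x. ennreal (g x)))
      = density (PiM I (\<lambda>_. F)) (\<lambda>t. \<Prod>k\<in>I. ennreal (g (t k)))"
    by (rule PiM_density[OF finite_index _ g_F]) (simp_all add: prob_space_imp_sigma_finite M.prob_space_axioms)
  also have "\<dots> = density (PiM I (\<lambda>_. F)) (\<lambda>t. ennreal (\<Prod>k\<in>I. g (t k)))"
    using AE_nonneg prod_g prod_ennreal_g by (intro density_cong) (auto simp: prod_ennreal elim!: AE_mp)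
  finally have "PiM I (\<lambda>_. density F (\<lambda>x. ennreal (g x)))
      = density (PiM I (\<lambda>_. F)) (\<lambda>t. ennreal (\<Prod>k\<in>I. g (t k)))" .
  moreover have "AE t in PiM I (\<lambda>_. F). 0 \<le> (\<Prod>k\<in>I. g (t k))"
    using AE_nonneg by eventually_elim (simp add: prod_nonneg)
  ultimately show ?thesis by (simp add: measure_density_eq_integral[OF prod_g E])
qed

lemma expected_hinge_eq_payoff:
  "expected_hinge s =
     s * measure (PiM I (\<lambda>_. density F (\<lambda>x. ennreal (2 * x)))) (efficient_set s)
     - (1 - s) * measure (PiM I (\<lambda>_. density F (\<lambda>x. ennreal (2 * (1 - x))))) (efficient_set s)"
proof -
  have "AE t in PiM I (\<lambda>_. F). \<bar>likelihood_plus t\<bar> \<le> 2 ^ card I"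
    and "AE t in PiM I (\<lambda>_. F). \<bar>likelihood_minus t\<bar> \<le> 2 ^ card I"
    using AE_bounded by (eventually_elim, simp)+
  then have integrable:
    "integrable (PiM I (\<lambda>_. F)) (\<lambda>t. likelihood_plus t * indicator (efficient_set s) t)"
    "integrable (PiM I (\<lambda>_. F)) (\<lambda>t. likelihood_minus t * indicator (efficient_set s) t)"
    by (intro integrable_real_mult_indicator integrable_const_bound; simp)+
  have "s * measure (PiM I (\<lambda>_. density F (\<lambda>x. ennreal (2 * x)))) (efficient_set s)
      - (1 - s) * measure (PiM I (\<lambda>_. density F (\<lambda>x. ennreal (2 * (1 - x))))) (efficient_set s)
    = s * (\<integral>t. likelihood_plus t * indicator (efficient_set s) t \<partial>PiM I (\<lambda>_. F))
      - (1 - s) * (\<integral>t. likelihood_minus t * indicator (efficient_set s) t \<partial>PiM I (\<lambda>_. F))"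
    unfolding likelihood_plus_def likelihood_minus_def
    by (simp add: measure_PiM_density)
  also have "\<dots> = (\<integral>t. s * (likelihood_plus t * indicator (efficient_set s) t)
      - (1 - s) * (likelihood_minus t * indicator (efficient_set s) t) \<partial>PiM I (\<lambda>_. F))"
    using integrable by simp
  also have "\<dots> = expected_hinge s"
    unfolding expected_hinge_def
    by (intro Bochner_Integration.integral_cong) (auto simp: hinge_def efficient_set_def indicator_def)
  finally show ?thesis ..
qed

lemma expected_hinge_differentiable:
  assumes "0 < s" "s < 1"
  shows "expected_hinge differentiable (at s)"
  using expected_hinge_has_derivative[OF AE_not_indifferent[of s]] assms
  unfolding real_differentiable_def by auto

lemma expected_hinge_has_derivative_0: "(expected_hinge has_real_derivative 0) (at 0)"
proof -
  have "AE t in PiM I (\<lambda>_. F). (if (1 - 0) * likelihood_minus t < 0 * likelihood_plus t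
      then likelihood_plus t + likelihood_minus t else 0) = 0"
    using AE_bounded by eventually_elim auto
  then show ?thesis
    using expected_hinge_has_derivative[OF AE_not_indifferent[of 0]] by (simp add: integral_eq_zero_AE)
qed

lemma expected_hinge_strict_convex_01: "strict_convex_on {0<..<1} expected_hinge"
proof (rule expected_hinge_strict_convex)
  show "emeasure (PiM I (\<lambda>_. F)) {t \<in> space (PiM I (\<lambda>_. F)).
      x * likelihood_plus t < (1 - x) * likelihood_minus t \<and>
      (1 - y) * likelihood_minus t < y * likelihood_plus t} \<noteq> 0"
    if "x \<in> {0<..<1}" "y \<in> {0<..<1}" "x < y" for x y
    using that by (intro emeasure_separated_ne_zero) auto
qed (rule convex_real_interval)

end

section \<open>The signal model\<close>

lemma eff_event_iff_likelihoods:
  "eff_event n i s t \<longleftrightarrow>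
    (1 - s) * (\<Prod>k\<in>{..<n} - {i}. 2 * (1 - t k)) \<le> s * (\<Prod>k\<in>{..<n} - {i}. 2 * t k)"
proof -
  let ?I = "{..<n} - {i}"
  have "(\<Prod>k\<in>?I. 2 * t k) = 2 ^ card ?I * (\<Prod>k\<in>?I. t k)"
    and "(\<Prod>k\<in>?I. 2 * (1 - t k)) = 2 ^ card ?I * (\<Prod>k\<in>?I. 1 - t k)"
    by (subst prod.distrib, simp)+
  then show ?thesis
    unfolding eff_event_def mult.left_commute[of s] mult.left_commute[of "1 - s"] by simp
qed

locale signal_densities =
  fixes gp gm :: "real \<Rightarrow> real"
  assumes meas_p: "gp \<in> borel_measurable borel" and meas_m: "gm \<in> borel_measurable borel"
    and nonneg_p: "\<And>x. gp x \<ge> 0" and nonneg_m: "\<And>x. gm x \<ge> 0"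
    and supp_p: "\<And>x. x \<notin> {0..1} \<Longrightarrow> gp x = 0"
    and supp_m: "\<And>x. x \<notin> {0..1} \<Longrightarrow> gm x = 0"
    and prob_p: "(\<integral>\<^sup>+ x. ennreal (gp x) \<partial>lborel) = 1"
    and prob_m: "(\<integral>\<^sup>+ x. ennreal (gm x) \<partial>lborel) = 1"
    and normalized: "AE x in lborel. x \<in> {0..1} \<longrightarrow> gp x = x * (gp x + gm x)"
    and support: "\<And>a b. 0 \<le> a \<Longrightarrow> a < b \<Longrightarrow> b \<le> 1 \<Longrightarrow>
         measure (sig_dist (\<lambda>x. (gp x + gm x) / 2)) {a<..<b} > 0"
begin

lemmas [measurable] = meas_p meas_m

definition F :: "real measure" where
  "F = sig_dist (\<lambda>x. (gp x + gm x) / 2)"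

lemma sets_F: "sets F = sets borel"
  by (simp add: F_def sig_dist_def)

lemma prob_space_F: "prob_space F"
proof (rule prob_spaceI)
  have "ennreal ((gp x + gm x) / 2) = ennreal (1 / 2) * (ennreal (gp x) + ennreal (gm x))" for x
  proof -
    have "ennreal ((gp x + gm x) / 2) = ennreal (1 / 2 * (gp x + gm x))" by simp
    also have "\<dots> = ennreal (1 / 2) * ennreal (gp x + gm x)"
      using nonneg_p[of x] nonneg_m[of x] by (intro ennreal_mult) auto
    also have "ennreal (gp x + gm x) = ennreal (gp x) + ennreal (gm x)"
      using nonneg_p[of x] nonneg_m[of x] by (rule ennreal_plus)
    finally show ?thesis .
  qed
  then have "(\<integral>\<^sup>+ x. ennreal ((gp x + gm x) / 2) \<partial>lborel)
      = ennreal (1 / 2) * ((\<integral>\<^sup>+ x. ennreal (gp x) \<partial>lborel) + (\<integral>\<^sup>+ x. ennreal (gm x) \<partial>lborel))"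
    by (simp add: nn_integral_cmult nn_integral_add)
  also have "\<dots> = ennreal (1 / 2) * ennreal 2" using prob_p prob_m by simp
  also have "\<dots> = ennreal (1 / 2 * 2)" by (rule ennreal_mult[symmetric]) auto
  also have "\<dots> = 1" by simp
  finally show "emeasure F (space F) = 1"
    by (simp add: F_def sig_dist_def emeasure_density)
qed

lemma AE_interior_F: "AE x in F. 0 < x \<and> x < 1"
proof -
  have "AE x in lborel. 0 < ennreal ((gp x + gm x) / 2) \<longrightarrow> 0 < x \<and> x < 1"
    using AE_lborel_singleton[of 0] AE_lborel_singleton[of 1]
    by eventually_elim (use supp_p supp_m in \<open>fastforce simp: less_le\<close>)
  then show ?thesis
    unfolding F_def sig_dist_def by (subst AE_density) auto
qed

lemma atomless_F: "emeasure F {c} = 0"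
proof -
  have "emeasure F {c} = (\<integral>\<^sup>+ x. ennreal ((gp x + gm x) / 2) * indicator {c} x \<partial>lborel)"
    unfolding F_def sig_dist_def by (intro emeasure_density) auto
  also have "\<dots> = (\<integral>\<^sup>+ (x :: real). 0 \<partial>lborel)"
  proof (rule nn_integral_cong_AE)
    show "AE x in lborel. ennreal ((gp x + gm x) / 2) * indicator {c} x = 0"
      using AE_lborel_singleton[of c] by eventually_elim simp
  qed
  finally show ?thesis by simp
qed

lemma full_support_F: "0 < a \<Longrightarrow> a < b \<Longrightarrow> b < 1 \<Longrightarrow> emeasure F {a<..<b} \<noteq> 0"
  using support[of a b] by (auto simp: F_def measure_def)

lemma sig_dist_eq_density_F:
  assumes [measurable]: "g \<in> borel_measurable borel" "d \<in> borel_measurable borel"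
    and "\<And>x. x \<notin> {0..1} \<Longrightarrow> g x = 0"
    and "AE x in lborel. x \<in> {0..1} \<longrightarrow> g x = (gp x + gm x) / 2 * d x"
  shows "sig_dist g = density F (\<lambda>x. ennreal (d x))"
proof -
  have "density F (\<lambda>x. ennreal (d x))
      = density lborel (\<lambda>x. ennreal ((gp x + gm x) / 2) * ennreal (d x))"
    unfolding F_def sig_dist_def by (rule density_density_eq) auto
  also have "\<dots> = density lborel (\<lambda>x. ennreal (g x))"
  proof (rule density_cong)
    show "AE x in lborel. ennreal ((gp x + gm x) / 2) * ennreal (d x) = ennreal (g x)"
      using assms(4)
    proof eventually_elim
      case (elim x)
      show ?case
      proof (cases "x \<in> {0..1}")
        case True
        then have g: "g x = (gp x + gm x) / 2 * d x" using elim by blast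
        have "0 \<le> (gp x + gm x) / 2" using nonneg_p[of x] nonneg_m[of x] by simp
        then show ?thesis unfolding g by (rule ennreal_mult'[symmetric])
      next
        case False
        then show ?thesis using assms(3) supp_p supp_m by simp
      qed
    qed
  qed measurable
  finally show ?thesis by (simp add: sig_dist_def)
qed

lemma sig_dist_plus: "sig_dist gp = density F (\<lambda>x. ennreal (2 * x))"
proof (rule sig_dist_eq_density_F[OF meas_p _ supp_p])
  show "AE x in lborel. x \<in> {0..1} \<longrightarrow> gp x = (gp x + gm x) / 2 * (2 * x)"
    using normalized by eventually_elim (simp add: mult.commute)
qed measurable

lemma sig_dist_minus: "sig_dist gm = density F (\<lambda>x. ennreal (2 * (1 - x)))"
proof (rule sig_dist_eq_density_F[OF meas_m _ supp_m])
  show "AE x in lborel. x \<in> {0..1} \<longrightarrow> gm x = (gp x + gm x) / 2 * (2 * (1 - x))"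
    using normalized
  proof eventually_elim
    case (elim x)
    show ?case
    proof
      assume "x \<in> {0..1}"
      with elim have "gp x = x * (gp x + gm x)" by blast
      moreover have "(gp x + gm x) / 2 * (2 * (1 - x)) = gp x + gm x - x * (gp x + gm x)"
        by (simp add: field_simps)
      ultimately show "gm x = (gp x + gm x) / 2 * (2 * (1 - x))" by linarith
    qed
  qed
qed measurable

lemma signal_products: "finite I \<Longrightarrow> I \<noteq> {} \<Longrightarrow> signal_products F I"
  unfolding signal_products_def signal_products_axioms_def finite_product_prob_space_def
    finite_product_sigma_finite_def finite_product_sigma_finite_axioms_def
    product_prob_space_def product_prob_space_axioms_def product_sigma_finite_def
  using prob_space_F sets_F AE_interior_F atomless_F full_support_F
  by (simp add: prob_space_imp_sigma_finite)

end

theorem lemmaB1: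
  fixes n i :: nat and gp gm :: "real \<Rightarrow> real"
  assumes n: "n \<ge> 2" and i: "i < n"
    and meas_p: "gp \<in> borel_measurable borel" and meas_m: "gm \<in> borel_measurable borel"
    and nonneg_p: "\<And>x. gp x \<ge> 0" and nonneg_m: "\<And>x. gm x \<ge> 0"
    and supp_p: "\<And>x. x \<notin> {0..1} \<Longrightarrow> gp x = 0"
    and supp_m: "\<And>x. x \<notin> {0..1} \<Longrightarrow> gm x = 0"
    and prob_p: "(\<integral>\<^sup>+ x. ennreal (gp x) \<partial>lborel) = 1"
    and prob_m: "(\<integral>\<^sup>+ x. ennreal (gm x) \<partial>lborel) = 1"
    and mutual_ac: "AE x in lborel. (gp x = 0 \<longleftrightarrow> gm x = 0)"
    and normalized: "AE x in lborel. x \<in> {0..1} \<longrightarrow> gp x = x * (gp x + gm x)"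
    and support: "\<And>a b. 0 \<le> a \<Longrightarrow> a < b \<Longrightarrow> b \<le> 1 \<Longrightarrow>
         measure (sig_dist (\<lambda>x. (gp x + gm x) / 2)) {a<..<b} > 0"
  shows "strict_convex_on {0<..<1} (Ubar n i gp gm)
       \<and> (\<forall>s\<in>{0<..<1}. Ubar n i gp gm differentiable (at s))
       \<and> (Ubar n i gp gm has_real_derivative 0) (at_right 0)"
proof -
  interpret signal_densities gp gm
    using meas_p meas_m nonneg_p nonneg_m supp_p supp_m prob_p prob_m normalized support
    by unfold_locales
  have "(if i = 0 then 1 else 0) \<in> {..<n} - {i}" using n i by auto
  then interpret signal_products F "{..<n} - {i}"
    by (intro signal_products) auto
  have "Ubar n i gp gm = expected_hinge"
  proof
    fix s
    have events: "{t \<in> space (PiM ({..<n} - {i}) (\<lambda>_. sig_dist g)). eff_event n i s t}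
        = efficient_set s" for g
      by (auto simp: efficient_set_def eff_event_iff_likelihoods likelihood_plus_def
          likelihood_minus_def space_PiM sig_dist_def)
    show "Ubar n i gp gm s = expected_hinge s"
      unfolding Ubar_def eff_prob_def events
      unfolding sig_dist_plus sig_dist_minus expected_hinge_eq_payoff ..
  qed
  then show ?thesis
    using expected_hinge_strict_convex_01 expected_hinge_differentiable
      has_field_derivative_at_within[OF expected_hinge_has_derivative_0] by auto
qed

end
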